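(* Let $F_{ij}$ ($0\le i\le m$, $0\le j\le n$) be a dual-convex $m\times n$ net in $I^3$ with faces $p_{kl}$ and metric dual $p^*_{kl}=(p^1_{kl},p^2_{kl},p^3_{kl})$, $0\le k<m$, $0\le l<n$. A collection $C_{kl}\in\mathbb{R}^3$ ($0\le k<m$, $0\le l<n$) is reciprocal-parallel to $F_{ij}$ if and only if $C_{kl}=(-c^2_{kl},c^1_{kl},h_{kl})$ for all $k,l$, where $c^*_{kl}=(c^1_{kl},c^2_{kl},c^3_{kl})$ is a collection of points, not all equal, Christoffel dual to $p^*_{kl}$, and the real numbers $h_{kl}$ satisfy, for all adjacent index pairs $(k,l),(k',l')$, $$h_{kl}-h_{k'l'}=(c^1_{kl}-c^1_{k'l'})\,p^2_{kl}-(c^2_{kl}-c^2_{k'l'})\,p^1_{kl}.$$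
   Context: $I^3$ is $\mathbb{R}^3$ with coordinates $(x,y,z)$; isotropic = parallel to the $z$-axis. Metric duality: non-isotropic plane $z=P^1x+P^2y-P^3$ $\leftrightarrow$ point $(P^1,P^2,P^3)$. An $m\times n$ net: points $F_{ij}$, $0\le i\le m,0\le j\le n$, with $F_{ij},F_{i+1,j},F_{i+1,j+1},F_{i,j+1}$ consecutive vertices of a convex planar quadrilateral (face $p_{ij}$) for all $0\le i<m,0\le j<n$. Boundary vertices: $i\in\{0,m\}$ or $j\in\{0,n\}$; consecutive faces around non-boundary $F_{ij}$: $p_{i-1,j-1},p_{i,j-1},p_{ij},p_{i-1,j}$. Convex 4-hedral angle with vertex $O$: union of rays from $O$ meeting a convex quadrilateral in a plane not through $O$; flat angles: rays through one side; admissible: isotropic line through $O$ meets its interior. Dual-convex: $m,n\ge2$ and at each non-boundary vertex the four consecutive face planes are planes of four consecutive flat angles of an admissible convex 4-hedral angle. The metric dual of a dual-convex net is the $(m-1)\times(n-1)$ net of points $p^*_{kl}$ dual to the face planes. A collection $C_{kl}$, $0\le k<m$, $0\le l<n$, not all equal, is reciprocal-parallel to $F_{ij}$ if $C_{i,j-1}C_{ij}\parallel F_{i+1,j}F_{ij}$ for all $0\le i<m,0<j<n$ and $C_{i-1,j}C_{ij}\parallel F_{i,j+1}F_{ij}$ for all $0<i<m,0\le j<n$. Index pairs are adjacent if they differ by $1$ in exactly one coordinate. Labeled quadrilaterals $ABCD$, $A'B'C'D'$ are dual if $AB\parallel A'B'$, $BC\parallel B'C'$, $CD\parallel C'D'$,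 $DA\parallel D'A'$, $AC\parallel B'D'$, $BD\parallel A'C'$; two collections indexed alike are Christoffel dual if corresponding faces (quadrilaterals on indices $(k,l),(k+1,l),(k+1,l+1),(k,l+1)$) are dual. *)

theory Defs
  imports "HOL-Analysis.Analysis"
begin

type_synonym pt = "real^3"

definition par :: "pt \<Rightarrow> pt \<Rightarrow> bool" where
  "par u v \<longleftrightarrow> collinear {0, u, v}"

definition convex_quad :: "pt \<Rightarrow> pt \<Rightarrow> pt \<Rightarrow> pt \<Rightarrow> bool" where
  "convex_quad A B C D \<longleftrightarrow> \<not> collinear {A, B, C, D} \<and> open_segment A C \<inter> open_segment B D \<noteq> {}"

definition is_net :: "(nat \<Rightarrow> nat \<Rightarrow> pt) \<Rightarrow> nat \<Rightarrow> nat \<Rightarrow> bool" where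
  "is_net F m n \<longleftrightarrow> (\<forall>i<m. \<forall>j<n. convex_quad (F i j) (F (Suc i) j) (F (Suc i) (Suc j)) (F i (Suc j)))"

definition face_plane :: "(nat \<Rightarrow> nat \<Rightarrow> pt) \<Rightarrow> nat \<Rightarrow> nat \<Rightarrow> pt set" where
  "face_plane F k l = affine hull {F k l, F (Suc k) l, F (Suc k) (Suc l), F k (Suc l)}"

definition isotropic_dir :: pt where
  "isotropic_dir = vector [0, 0, 1]"

definition hedral_angle :: "pt \<Rightarrow> pt \<Rightarrow> pt \<Rightarrow> pt \<Rightarrow> pt \<Rightarrow> pt set" where
  "hedral_angle V A B C D = {V + t *\<^sub>R (x - V) | t x. t \<ge> 0 \<and> x \<in> convex hull {A, B, C, D}}"

definition admissible_angle :: "pt \<Rightarrow> pt \<Rightarrow> pt \<Rightarrow> pt \<Rightarrow> pt \<Rightarrow> bool" where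
  "admissible_angle V A B C D \<longleftrightarrow> convex_quad A B C D \<and> V \<notin> affine hull {A, B, C, D} \<and>
     (\<exists>s. V + s *\<^sub>R isotropic_dir \<in> interior (hedral_angle V A B C D))"

text \<open>The consecutive faces around non-boundary F_ij are
  p_{i-1,j-1}, p_{i,j-1}, p_ij, p_{i-1,j}; their planes are the planes of the four
  consecutive flat angles (spanned by V and the sides AB, BC, CD, DA).\<close>
definition dual_convex :: "(nat \<Rightarrow> nat \<Rightarrow> pt) \<Rightarrow> nat \<Rightarrow> nat \<Rightarrow> bool" where
  "dual_convex F m n \<longleftrightarrow> is_net F m n \<and> 2 \<le> m \<and> 2 \<le> n \<and>
     (\<forall>i j. 0 < i \<and> i < m \<and> 0 < j \<and> j < n \<longrightarrow>
        (\<exists>V A B C D. admissible_angle V A B C D \<and>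
           face_plane F (i - 1) (j - 1) = affine hull {V, A, B} \<and>
           face_plane F i (j - 1) = affine hull {V, B, C} \<and>
           face_plane F i j = affine hull {V, C, D} \<and>
           face_plane F (i - 1) j = affine hull {V, D, A}))"

text \<open>Metric duality: non-isotropic plane z = P1 x + P2 y - P3 corresponds to point (P1,P2,P3).\<close>
definition dual_point :: "pt set \<Rightarrow> pt" where
  "dual_point S = (THE P. S = {x. x$3 = P$1 * x$1 + P$2 * x$2 - P$3})"

definition metric_dual :: "(nat \<Rightarrow> nat \<Rightarrow> pt) \<Rightarrow> nat \<Rightarrow> nat \<Rightarrow> pt" where
  "metric_dual F k l = dual_point (face_plane F k l)"

definition not_all_equal :: "(nat \<Rightarrow> nat \<Rightarrow> 'a) \<Rightarrow> nat \<Rightarrow> nat \<Rightarrow> bool" where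
  "not_all_equal C m n \<longleftrightarrow> (\<exists>k l k' l'. k < m \<and> l < n \<and> k' < m \<and> l' < n \<and> C k l \<noteq> C k' l')"

definition reciprocal_parallel :: "(nat \<Rightarrow> nat \<Rightarrow> pt) \<Rightarrow> nat \<Rightarrow> nat \<Rightarrow> (nat \<Rightarrow> nat \<Rightarrow> pt) \<Rightarrow> bool" where
  "reciprocal_parallel F m n C \<longleftrightarrow> not_all_equal C m n \<and>
     (\<forall>i j. i < m \<and> 0 < j \<and> j < n \<longrightarrow> par (C i j - C i (j - 1)) (F i j - F (Suc i) j)) \<and>
     (\<forall>i j. 0 < i \<and> i < m \<and> j < n \<longrightarrow> par (C i j - C (i - 1) j) (F i j - F i (Suc j)))"

definition dual_quads :: "pt \<Rightarrow> pt \<Rightarrow> pt \<Rightarrow> pt \<Rightarrow> pt \<Rightarrow> pt \<Rightarrow> pt \<Rightarrow> pt \<Rightarrow> bool" where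
  "dual_quads A B C D A' B' C' D' \<longleftrightarrow>
     par (B - A) (B' - A') \<and> par (C - B) (C' - B') \<and> par (D - C) (D' - C') \<and>
     par (A - D) (A' - D') \<and> par (C - A) (D' - B') \<and> par (D - B) (C' - A')"

definition christoffel_dual :: "(nat \<Rightarrow> nat \<Rightarrow> pt) \<Rightarrow> (nat \<Rightarrow> nat \<Rightarrow> pt) \<Rightarrow> nat \<Rightarrow> nat \<Rightarrow> bool" where
  "christoffel_dual P Q m n \<longleftrightarrow> (\<forall>k l. Suc k < m \<and> Suc l < n \<longrightarrow>
     dual_quads (P k l) (P (Suc k) l) (P (Suc k) (Suc l)) (P k (Suc l))
                (Q k l) (Q (Suc k) l) (Q (Suc k) (Suc l)) (Q k (Suc l)))"

definition adjacent :: "nat \<times> nat \<Rightarrow> nat \<times> nat \<Rightarrow> bool" where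
  "adjacent a b \<longleftrightarrow> (fst a = fst b \<and> (snd a = Suc (snd b) \<or> snd b = Suc (snd a))) \<or>
                     (snd a = snd b \<and> (fst a = Suc (fst b) \<or> fst b = Suc (fst a)))"

end

theory Submission
  imports Defs
begin

text \<open>A vector is parallel to the common edge of two adjacent faces iff it is orthogonal to the
  normals \<open>(P\<^sub>1, P\<^sub>2, -1)\<close> of both face planes, as these are distinct and non-isotropic.
  For \<open>C = (-c\<^sub>2, c\<^sub>1, h)\<close>, orthogonality of \<open>C\<^sub>a - C\<^sub>b\<close> to the normal of the face
  dual to \<open>p\<^sub>a\<close> is exactly the relation for \<open>h\<close>; it remains to lift the top view
  \<open>(c\<^sub>1, c\<^sub>2)\<close> to a net Christoffel dual to \<open>p\<^sup>*\<close>. Around an interior vertex \<open>V\<close> the four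
  dual points lie on the plane dual to \<open>V\<close>, and the lift must lie on a parallel plane: \<open>c\<^sub>3\<close>
  changes along an edge by the vertical moment \<open>(V \<times> (C\<^sub>b - C\<^sub>a))\<^sub>3\<close>. This moment does not
  depend on the point \<open>V\<close> of the shared edge, so it is a closed form on the grid and has a
  potential. On a common non-isotropic plane, parallelism reduces to parallelism of top views,
  which the \<open>h\<close>-relations give along edges and, summed, along diagonals.\<close>

unbundle cross3_syntax

section \<open>Vectors in three-space\<close>

lemma inner_vec3: "x \<bullet> y = x$1 * y$1 + x$2 * y$2 + x$3 * y$3" for x y :: "real^3"
  by (simp add: inner_vec_def sum_3)

lemma par_iff_cross3_eq_0: "par u v \<longleftrightarrow> u \<times> v = 0"
  by (simp add: par_def cross_eq_0)

lemma par_diff_commute: "par (a - b) (c - d) \<longleftrightarrow> par (b - a) (d - c)"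
  by (metis par_iff_cross3_eq_0 cross_minus_left cross_minus_right minus_diff_eq neg_equal_0_iff_equal)

lemma cross3_eq_0_if_orthogonal_to_both:
  assumes "N \<times> M \<noteq> 0" "x \<bullet> N = 0" "x \<bullet> M = 0" "y \<bullet> N = 0" "y \<bullet> M = 0"
  shows "x \<times> y = 0"
proof -
  have "(N \<times> M) \<times> x = 0" "(N \<times> M) \<times> y = 0"
    using assms by (simp_all add: Lagrange cross_skew[of "N \<times> M"])
  then obtain a b where "x = a *\<^sub>R (N \<times> M)" "y = b *\<^sub>R (N \<times> M)"
    using assms(1) by (metis cross_eq_0 collinear_lemma scaleR_zero_left)
  then show ?thesis
    by (simp add: cross_mult_left cross_mult_right)
qed

lemma cross3_eq_0_iff_orthogonal_to_both:
  assumes "N \<times> M \<noteq> 0" "u \<noteq> 0" "u \<bullet> N = 0" "u \<bullet> M = 0"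
  shows "x \<times> u = 0 \<longleftrightarrow> x \<bullet> N = 0 \<and> x \<bullet> M = 0"
proof
  assume "x \<times> u = 0"
  then obtain t where "x = t *\<^sub>R u"
    using assms(2) by (metis cross_eq_0 cross_skew collinear_lemma neg_equal_0_iff_equal scaleR_zero_left)
  then show "x \<bullet> N = 0 \<and> x \<bullet> M = 0"
    using assms(3,4) by simp
qed (use assms cross3_eq_0_if_orthogonal_to_both in blast)

lemma collinear_3_iff_cross3: "collinear {A, B, C} \<longleftrightarrow> (B - A) \<times> (C - A) = 0"
proof -
  have "collinear {A, B, C} \<longleftrightarrow> collinear {B, A, C}"
    by (simp add: insert_commute)
  also have "\<dots> \<longleftrightarrow> collinear {0, B - A, C - A}"
    by (rule collinear_3) simp
  finally show ?thesis
    by (simp add: cross_eq_0)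
qed

lemma cross3_decomposition:
  fixes a b y :: "real^3"
  shows "((a \<times> b) \<bullet> (a \<times> b)) *\<^sub>R y
    = ((y \<times> b) \<bullet> (a \<times> b)) *\<^sub>R a + ((a \<times> y) \<bullet> (a \<times> b)) *\<^sub>R b + (y \<bullet> (a \<times> b)) *\<^sub>R (a \<times> b)"
  by (simp add: cross3_simps forall_3)

lemma affine_hull_3_eq_plane:
  fixes V A B :: "real^3"
  assumes "(A - V) \<times> (B - V) \<noteq> 0"
  shows "affine hull {V, A, B} = {z. ((A - V) \<times> (B - V)) \<bullet> (z - V) = 0}"
proof -
  define n where "n = (A - V) \<times> (B - V)"
  have P_eq: "{z. n \<bullet> (z - V) = 0} = {z. n \<bullet> z = n \<bullet> V}"
    by (auto simp: inner_diff_right)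
  have "n \<bullet> (A - V) = 0" "n \<bullet> (B - V) = 0"
    by (simp_all add: n_def dot_cross_self inner_commute)
  then have "affine hull {V, A, B} \<subseteq> {z. n \<bullet> (z - V) = 0}"
    unfolding P_eq by (intro hull_minimal) (auto simp: affine_hyperplane inner_diff_right)
  moreover have "z \<in> affine hull {V, A, B}" if z: "n \<bullet> (z - V) = 0" for z
  proof -
    have nn: "n \<bullet> n \<noteq> 0"
      using assms by (simp add: n_def)
    define v where "v = (((z - V) \<times> (B - V)) \<bullet> n) / (n \<bullet> n)"
    define w where "w = (((A - V) \<times> (z - V)) \<bullet> n) / (n \<bullet> n)"
    have "(n \<bullet> n) *\<^sub>R (z - V) = (n \<bullet> n) *\<^sub>R (v *\<^sub>R (A - V) + w *\<^sub>R (B - V))"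
      using cross3_decomposition[of "A - V" "B - V" "z - V"] z nn
      by (simp add: n_def v_def w_def inner_commute scaleR_add_right)
    then have "z - V = v *\<^sub>R (A - V) + w *\<^sub>R (B - V)"
      using nn by simp
    then have "z = (1 - v - w) *\<^sub>R V + v *\<^sub>R A + w *\<^sub>R B"
      by (simp add: algebra_simps)
    then show ?thesis
      unfolding affine_hull_3 by force
  qed
  ultimately show ?thesis
    unfolding n_def by blast
qed

lemma triple_product_neq_0:
  assumes "\<not> collinear {A, B, C}" "V \<notin> affine hull {A, B, C}"
  shows "((A - V) \<times> (B - V)) \<bullet> (C - V) \<noteq> 0"
proof
  assume "((A - V) \<times> (B - V)) \<bullet> (C - V) = 0"
  then have "((B - A) \<times> (C - A)) \<bullet> (V - A) = 0"
    by (simp add: cross_components inner_vec3 algebra_simps)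
  then have "V \<in> affine hull {A, B, C}"
    using assms(1) affine_hull_3_eq_plane[of B A C] by (simp add: collinear_3_iff_cross3)
  with assms(2) show False ..
qed

section \<open>Non-isotropic planes and metric duality\<close>

definition dual_plane :: "pt \<Rightarrow> pt set" where
  "dual_plane P = {x. x$3 = P$1 * x$1 + P$2 * x$2 - P$3}"

definition plane_normal :: "pt \<Rightarrow> pt" where
  "plane_normal P = vector [P$1, P$2, -1]"

lemma mem_dual_plane_iff: "x \<in> dual_plane P \<longleftrightarrow> plane_normal P \<bullet> x = P$3"
  by (auto simp: dual_plane_def plane_normal_def inner_vec3)

lemma mem_dual_plane_commute: "x \<in> dual_plane P \<longleftrightarrow> P \<in> dual_plane x"
  by (auto simp: dual_plane_def)

lemma dual_plane_inject: "dual_plane P = dual_plane Q \<longleftrightarrow> P = Q"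
proof
  assume eq: "dual_plane P = dual_plane Q"
  have "vector [0, 0, - P$3] \<in> dual_plane Q" "vector [1, 0, P$1 - P$3] \<in> dual_plane Q"
       "vector [0, 1, P$2 - P$3] \<in> dual_plane Q"
    unfolding eq[symmetric] by (simp_all add: dual_plane_def)
  then show "P = Q"
    by (simp add: dual_plane_def vec_eq_iff forall_3)
qed simp

lemma dual_point_dual_plane [simp]: "dual_point (dual_plane P) = P"
  unfolding dual_point_def dual_plane_def[symmetric] by (simp add: dual_plane_inject)

lemma plane_eq_dual_plane:
  assumes "n$3 \<noteq> 0"
  shows "{z. n \<bullet> (z - V) = 0} = dual_plane (vector [- n$1 / n$3, - n$2 / n$3, - (n \<bullet> V) / n$3])"
    (is "_ = dual_plane ?P")
proof (intro set_eqI)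
  fix z :: pt
  have "n \<bullet> (z - V) = n$3 * (z$3 - (?P$1 * z$1 + ?P$2 * z$2 - ?P$3))"
    using assms by (simp add: inner_vec3 field_simps)
  then show "z \<in> {z. n \<bullet> (z - V) = 0} \<longleftrightarrow> z \<in> dual_plane ?P"
    using assms by (simp add: dual_plane_def)
qed

lemma dual_planes_common_point_slope:
  assumes "P \<noteq> Q" "x \<in> dual_plane P" "x \<in> dual_plane Q"
  shows "P$1 \<noteq> Q$1 \<or> P$2 \<noteq> Q$2"
  using assms by (auto simp: dual_plane_def vec_eq_iff forall_3)

lemma plane_normal_cross3_neq_0:
  "P$1 \<noteq> Q$1 \<or> P$2 \<noteq> Q$2 \<Longrightarrow> plane_normal P \<times> plane_normal Q \<noteq> 0"
  by (auto simp: vec_eq_iff forall_3 cross_components plane_normal_def)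

lemma par_common_edge_iff:
  assumes "P \<noteq> Q" "E \<noteq> E'"
    and "E \<in> dual_plane P" "E \<in> dual_plane Q" "E' \<in> dual_plane P" "E' \<in> dual_plane Q"
  shows "par X (E - E') \<longleftrightarrow> X \<bullet> plane_normal P = 0 \<and> X \<bullet> plane_normal Q = 0"
proof -
  have "plane_normal P \<times> plane_normal Q \<noteq> 0"
    using assms(1,3,4) by (intro plane_normal_cross3_neq_0 dual_planes_common_point_slope)
  moreover have "plane_normal P \<bullet> (E - E') = 0" "plane_normal Q \<bullet> (E - E') = 0"
    using assms(3-6) by (simp_all add: mem_dual_plane_iff inner_diff_right)
  ultimately show ?thesis
    using assms(2) by (simp add: par_iff_cross3_eq_0 cross3_eq_0_iff_orthogonal_to_both inner_commute)
qed

lemma cross3_eq_on_common_line: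
  assumes "P \<noteq> Q" "V \<in> dual_plane P" "V \<in> dual_plane Q" "V' \<in> dual_plane P" "V' \<in> dual_plane Q"
    and "X \<bullet> plane_normal P = 0" "X \<bullet> plane_normal Q = 0"
  shows "V \<times> X = V' \<times> X"
proof -
  have "plane_normal P \<times> plane_normal Q \<noteq> 0"
    using assms(1-3) by (intro plane_normal_cross3_neq_0 dual_planes_common_point_slope)
  moreover have "plane_normal P \<bullet> (V - V') = 0" "plane_normal Q \<bullet> (V - V') = 0"
    using assms(2-5) by (simp_all add: mem_dual_plane_iff inner_diff_right)
  ultimately have "(V - V') \<times> X = 0"
    using assms(6,7) cross3_eq_0_if_orthogonal_to_both[of "plane_normal P" "plane_normal Q" "V - V'" X]
    by (simp add: inner_commute)
  then show ?thesis
    by (simp add: Cross3.left_diff_distrib)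
qed

lemma par_if_top_views_par:
  assumes "plane_normal V \<bullet> Y = 0" "plane_normal V \<bullet> Z = 0" "Y$1 * Z$2 - Y$2 * Z$1 = 0"
  shows "par Y Z"
proof -
  have Y3: "Y$3 = V$1 * Y$1 + V$2 * Y$2" and Z3: "Z$3 = V$1 * Z$1 + V$2 * Z$2"
    using assms(1,2) by (simp_all add: plane_normal_def inner_vec3)
  have "(Y \<times> Z)$1 = - V$1 * (Y$1 * Z$2 - Y$2 * Z$1)" "(Y \<times> Z)$2 = - V$2 * (Y$1 * Z$2 - Y$2 * Z$1)"
    "(Y \<times> Z)$3 = Y$1 * Z$2 - Y$2 * Z$1"
    unfolding cross_components Y3 Z3 by (simp_all add: algebra_simps)
  then show ?thesis
    using assms(3) by (simp add: par_iff_cross3_eq_0 vec_eq_iff forall_3)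
qed

lemma par_top_view_eq_0:
  assumes "par X Y" "Y$1 \<noteq> 0 \<or> Y$2 \<noteq> 0" "X$1 = 0" "X$2 = 0"
  shows "X = 0"
  using assms by (auto simp: par_iff_cross3_eq_0 vec_eq_iff forall_3 cross_components)

section \<open>Convex quadrilaterals and admissible angles\<close>

lemma convex_quad_not_collinear:
  assumes "convex_quad A B C D"
  shows "\<not> collinear {A, B, C}"
proof
  assume ABC: "collinear {A, B, C}"
  obtain Q where Q: "Q \<in> open_segment A C" "Q \<in> open_segment B D"
    using assms by (auto simp: convex_quad_def)
  have "A \<noteq> C" "B \<noteq> Q"
    using Q by (auto simp: open_segment_def)
  moreover have "collinear {A, C, Q}"
    using Q by (intro collinear_subset[OF collinear_closed_segment[of A C]]) (auto dest: open_closed_segment)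
  moreover have "collinear {B, Q, D}"
    using Q by (intro collinear_subset[OF collinear_closed_segment[of B D]]) (auto dest: open_closed_segment)
  ultimately have "collinear {A, B, C, D}"
    using ABC by (smt (verit) collinear_4_3 insert_commute)
  then show False
    using assms by (simp add: convex_quad_def)
qed

lemma convex_quad_rotate: "convex_quad A B C D \<Longrightarrow> convex_quad B C D A"
  unfolding convex_quad_def by (simp add: insert_commute open_segment_commute Int_commute)

lemma convex_quad_same_side:
  assumes "convex_quad A B C D" "n \<bullet> A = b" "n \<bullet> B = b"
  shows "0 \<le> (n \<bullet> C - b) * (n \<bullet> D - b)"
proof -
  obtain Q where "Q \<in> open_segment A C" "Q \<in> open_segment B D"
    using assms(1) by (auto simp: convex_quad_def)
  then obtain s t where st: "0 < s" "0 < t"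
    and Q: "Q = (1 - s) *\<^sub>R A + s *\<^sub>R C" "Q = (1 - t) *\<^sub>R B + t *\<^sub>R D"
    by (auto simp: in_segment)
  have "n \<bullet> Q - b = s * (n \<bullet> C - b)"
    using assms(2) by (simp add: Q(1) inner_add_right algebra_simps)
  moreover have "n \<bullet> Q - b = t * (n \<bullet> D - b)"
    using assms(3) by (simp add: Q(2) inner_add_right algebra_simps)
  ultimately have "n \<bullet> D - b = (s / t) * (n \<bullet> C - b)"
    using st by (simp add: field_simps)
  then have "(n \<bullet> C - b) * (n \<bullet> D - b) = (s / t) * (n \<bullet> C - b)\<^sup>2"
    by (simp add: power2_eq_square)
  then show ?thesis
    using st by simp
qed

lemma hedral_angle_subset_halfspace:
  assumes "\<forall>x\<in>{A, B, C, D}. g \<bullet> V \<le> g \<bullet> x"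
  shows "hedral_angle V A B C D \<subseteq> {x. g \<bullet> V \<le> g \<bullet> x}"
proof
  fix y assume "y \<in> hedral_angle V A B C D"
  then obtain t x where y: "y = V + t *\<^sub>R (x - V)" and "t \<ge> 0"
    and x: "x \<in> convex hull {A, B, C, D}"
    unfolding hedral_angle_def by blast
  have "convex hull {A, B, C, D} \<subseteq> {x. g \<bullet> V \<le> g \<bullet> x}"
    using assms by (intro hull_minimal) (auto simp: convex_halfspace_ge)
  then have "0 \<le> t * (g \<bullet> x - g \<bullet> V)"
    using x \<open>t \<ge> 0\<close> by auto
  then show "y \<in> {x. g \<bullet> V \<le> g \<bullet> x}"
    by (simp add: y inner_add_right inner_diff_right algebra_simps)
qed

lemma admissible_angle_rotate:
  "admissible_angle V A B C D \<Longrightarrow> admissible_angle V B C D A"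
proof -
  have "{B, C, D, A} = {A, B, C, D}" by auto
  then show "admissible_angle V A B C D \<Longrightarrow> admissible_angle V B C D A"
    unfolding admissible_angle_def hedral_angle_def using convex_quad_rotate by auto
qed

lemma admissible_angle_triple_product_neq_0:
  assumes "admissible_angle V A B C D"
  shows "((A - V) \<times> (B - V)) \<bullet> (C - V) \<noteq> 0"
proof -
  have "affine hull {A, B, C} \<subseteq> affine hull {A, B, C, D}"
    by (intro hull_mono) auto
  with assms have "V \<notin> affine hull {A, B, C}" "\<not> collinear {A, B, C}"
    using convex_quad_not_collinear by (auto simp: admissible_angle_def)
  then show ?thesis
    by (rule triple_product_neq_0[rotated])
qed

lemma admissible_angle_flat_plane_non_isotropic:
  assumes "admissible_angle V A B C D"
  shows "((A - V) \<times> (B - V))$3 \<noteq> 0"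
proof
  \<comment> \<open>The angle lies in a closed half-space bounded by the plane through \<open>V, A, B\<close>. Were this
    plane isotropic, the isotropic line through \<open>V\<close> would lie in it and miss the interior.\<close>
  define n where "n = (A - V) \<times> (B - V)"
  define \<kappa> where "\<kappa> = n \<bullet> (C - V)"
  define g where "g = \<kappa> *\<^sub>R n"
  assume "n$3 = 0"
  have quad: "convex_quad A B C D"
    and iso: "\<exists>\<sigma>. V + \<sigma> *\<^sub>R isotropic_dir \<in> interior (hedral_angle V A B C D)"
    using assms by (auto simp: admissible_angle_def)
  have "\<kappa> \<noteq> 0"
    using admissible_angle_triple_product_neq_0[OF assms] by (simp add: \<kappa>_def n_def)
  then have "g \<noteq> 0"
    by (auto simp: g_def \<kappa>_def)
  have "n \<bullet> (A - V) = 0" "n \<bullet> (B - V) = 0"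
    by (simp_all add: n_def dot_cross_self inner_commute)
  then have nA: "n \<bullet> A = n \<bullet> V" and nB: "n \<bullet> B = n \<bullet> V"
    by (simp_all add: inner_diff_right)
  have side: "g \<bullet> V \<le> g \<bullet> x \<longleftrightarrow> 0 \<le> \<kappa> * (n \<bullet> x - n \<bullet> V)" for x
    by (simp add: g_def algebra_simps)
  have "0 \<le> \<kappa> * (n \<bullet> D - n \<bullet> V)" "\<kappa> = n \<bullet> C - n \<bullet> V"
    using convex_quad_same_side[OF quad nA nB] by (simp_all add: \<kappa>_def inner_diff_right)
  then have "\<forall>x\<in>{A, B, C, D}. g \<bullet> V \<le> g \<bullet> x"
    using nA nB by (auto simp: side)
  then have "interior (hedral_angle V A B C D) \<subseteq> interior {x. g \<bullet> V \<le> g \<bullet> x}"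
    by (intro interior_mono hedral_angle_subset_halfspace)
  also have "\<dots> = {x. g \<bullet> V < g \<bullet> x}"
    using \<open>g \<noteq> 0\<close> by (rule interior_halfspace_ge)
  finally obtain \<sigma> where "g \<bullet> V < g \<bullet> (V + \<sigma> *\<^sub>R isotropic_dir)"
    using iso by blast
  moreover have "g \<bullet> isotropic_dir = 0"
    using \<open>n$3 = 0\<close> by (simp add: g_def isotropic_dir_def inner_vec3)
  ultimately show False
    by (simp add: inner_add_right)
qed

lemma admissible_angle_flat_planes:
  assumes "admissible_angle V A B C D"
  shows "\<exists>P. affine hull {V, A, B} = dual_plane P"
    and "affine hull {V, A, B} \<noteq> affine hull {V, B, C}"
proof -
  define n where "n = (A - V) \<times> (B - V)"
  have "n \<bullet> (C - V) \<noteq> 0"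
    using admissible_angle_triple_product_neq_0[OF assms] by (simp add: n_def)
  then have plane: "affine hull {V, A, B} = {z. n \<bullet> (z - V) = 0}"
    unfolding n_def by (intro affine_hull_3_eq_plane) auto
  show "\<exists>P. affine hull {V, A, B} = dual_plane P"
    unfolding plane using plane_eq_dual_plane admissible_angle_flat_plane_non_isotropic[OF assms] n_def by blast
  have "C \<in> affine hull {V, B, C}"
    by (simp add: hull_inc)
  then show "affine hull {V, A, B} \<noteq> affine hull {V, B, C}"
    using \<open>n \<bullet> (C - V) \<noteq> 0\<close> unfolding plane by auto
qed

section \<open>Rectangular grids\<close>

lemma all_adjacent_iff:
  "(\<forall>k l k' l'. k < m \<and> l < n \<and> k' < m \<and> l' < n \<and> adjacent (k, l) (k', l') \<longrightarrow> R k l k' l') \<longleftrightarrow>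
   (\<forall>k l. Suc k < m \<and> l < n \<longrightarrow> R k l (Suc k) l \<and> R (Suc k) l k l) \<and>
   (\<forall>k l. k < m \<and> Suc l < n \<longrightarrow> R k l k (Suc l) \<and> R k (Suc l) k l)"
  unfolding adjacent_def by (auto 0 3)

lemma not_all_equal_adjacent:
  assumes "not_all_equal f m n"
  shows "\<exists>k l k' l'. k < m \<and> l < n \<and> k' < m \<and> l' < n \<and> adjacent (k, l) (k', l') \<and> f k l \<noteq> f k' l'"
proof (rule ccontr)
  assume "\<not> ?thesis"
  then have "\<forall>k l k' l'. k < m \<and> l < n \<and> k' < m \<and> l' < n \<and> adjacent (k, l) (k', l') \<longrightarrow> f k l = f k' l'"
    by blast
  then have horiz: "\<And>k l. Suc k < m \<Longrightarrow> l < n \<Longrightarrow> f k l = f (Suc k) l"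
    and vert: "\<And>k l. k < m \<Longrightarrow> Suc l < n \<Longrightarrow> f k l = f k (Suc l)"
    unfolding all_adjacent_iff by blast+
  have "f k l = f 0 0" if "k < m" "l < n" for k l
  proof -
    have "f k l = f k 0"
      using that(2) by (induction l) (use that(1) vert in force)+
    also have "f k 0 = f 0 0"
      using that by (induction k) (use horiz in force)+
    finally show ?thesis .
  qed
  then show False
    using assms unfolding not_all_equal_def by metis
qed

lemma closed_grid_form_potential:
  fixes w1 w2 :: "nat \<Rightarrow> nat \<Rightarrow> real"
  assumes "\<And>k l. Suc k < m \<Longrightarrow> Suc l < n \<Longrightarrow> w1 k l + w2 (Suc k) l = w2 k l + w1 k (Suc l)"
  obtains \<phi> where "\<And>k l. Suc k < m \<Longrightarrow> l < n \<Longrightarrow> \<phi> (Suc k) l - \<phi> k l = w1 k l"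
    and "\<And>k l. \<phi> k (Suc l) - \<phi> k l = w2 k l"
proof -
  define \<phi> where "\<phi> k l = (\<Sum>a<k. w1 a 0) + (\<Sum>b<l. w2 k b)" for k l
  have "\<phi> (Suc k) l - \<phi> k l = w1 k l" if "Suc k < m" "l < n" for k l
    using that(2)
  proof (induction l)
    case (Suc l)
    then have "\<phi> (Suc k) (Suc l) - \<phi> k (Suc l) = w1 k l + w2 (Suc k) l - w2 k l"
      by (simp add: \<phi>_def)
    also have "\<dots> = w1 k (Suc l)"
      using assms[OF that(1) Suc.prems] by simp
    finally show ?case .
  qed (simp add: \<phi>_def)
  moreover have "\<phi> k (Suc l) - \<phi> k l = w2 k l" for k l
    by (simp add: \<phi>_def)
  ultimately show ?thesis
    using that by blast
qed

section \<open>Faces of a dual-convex net\<close>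

lemma dual_convex_faces_around_vertex:
  assumes "dual_convex F m n" "0 < i" "i < m" "0 < j" "j < n"
  shows "\<exists>P. face_plane F (i - 1) (j - 1) = dual_plane P" "\<exists>P. face_plane F i (j - 1) = dual_plane P"
      "\<exists>P. face_plane F i j = dual_plane P" "\<exists>P. face_plane F (i - 1) j = dual_plane P"
    and "face_plane F (i - 1) (j - 1) \<noteq> face_plane F i (j - 1)" "face_plane F i (j - 1) \<noteq> face_plane F i j"
      "face_plane F i j \<noteq> face_plane F (i - 1) j" "face_plane F (i - 1) j \<noteq> face_plane F (i - 1) (j - 1)"
proof -
  obtain V A B C D where adm: "admissible_angle V A B C D"
    and faces: "face_plane F (i - 1) (j - 1) = affine hull {V, A, B}" "face_plane F i (j - 1) = affine hull {V, B, C}"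
      "face_plane F i j = affine hull {V, C, D}" "face_plane F (i - 1) j = affine hull {V, D, A}"
    using assms unfolding dual_convex_def by blast
  have "admissible_angle V B C D A" "admissible_angle V C D A B" "admissible_angle V D A B C"
    using adm admissible_angle_rotate by blast+
  note flat = admissible_angle_flat_planes[OF adm] admissible_angle_flat_planes[OF this(1)]
    admissible_angle_flat_planes[OF this(2)] admissible_angle_flat_planes[OF this(3)]
  show "\<exists>P. face_plane F (i - 1) (j - 1) = dual_plane P" "\<exists>P. face_plane F i (j - 1) = dual_plane P"
      "\<exists>P. face_plane F i j = dual_plane P" "\<exists>P. face_plane F (i - 1) j = dual_plane P"
    unfolding faces by (fact flat)+
  show "face_plane F (i - 1) (j - 1) \<noteq> face_plane F i (j - 1)" "face_plane F i (j - 1) \<noteq> face_plane F i j"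
      "face_plane F i j \<noteq> face_plane F (i - 1) j" "face_plane F (i - 1) j \<noteq> face_plane F (i - 1) (j - 1)"
    unfolding faces by (fact flat)+
qed

lemma dual_convex_face_plane:
  assumes "dual_convex F m n" "k < m" "l < n"
  shows "face_plane F k l = dual_plane (metric_dual F k l)"
proof -
  have "2 \<le> m" "2 \<le> n"
    using assms(1) by (auto simp: dual_convex_def)
  have interior_near: "\<exists>i. 0 < i \<and> i < N \<and> (a = i - 1 \<or> a = i)" if "2 \<le> N" "a < N" for a N :: nat
    using that by (intro exI[of _ "if Suc a < N then Suc a else a"]) auto
  obtain i j where ij: "0 < i" "i < m" "0 < j" "j < n" and "k = i - 1 \<or> k = i" "l = j - 1 \<or> l = j"
    using interior_near[of m k] interior_near[of n l] assms(2,3) \<open>2 \<le> m\<close> \<open>2 \<le> n\<close> by blast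
  then have "\<exists>P. face_plane F k l = dual_plane P"
    using dual_convex_faces_around_vertex(1-4)[OF assms(1) ij] by (elim disjE) simp_all
  then obtain P where "face_plane F k l = dual_plane P" ..
  moreover from this have "metric_dual F k l = P"
    by (simp add: metric_dual_def)
  ultimately show ?thesis
    by simp
qed

lemma dual_convex_vertices_in_dual_plane:
  assumes "dual_convex F m n" "k < m" "l < n"
  shows "F k l \<in> dual_plane (metric_dual F k l)" "F (Suc k) l \<in> dual_plane (metric_dual F k l)"
    "F (Suc k) (Suc l) \<in> dual_plane (metric_dual F k l)" "F k (Suc l) \<in> dual_plane (metric_dual F k l)"
  unfolding dual_convex_face_plane[OF assms, symmetric] face_plane_def by (simp_all add: hull_inc)

lemma dual_convex_edges_neq:
  assumes "dual_convex F m n" "k < m" "l < n"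
  shows "F k l \<noteq> F (Suc k) l" "F k l \<noteq> F k (Suc l)"
proof -
  have quad: "convex_quad (F k l) (F (Suc k) l) (F (Suc k) (Suc l)) (F k (Suc l))"
    using assms by (simp add: dual_convex_def is_net_def)
  then have "\<not> collinear {F k l, F (Suc k) l, F (Suc k) (Suc l)}"
    and "\<not> collinear {F k (Suc l), F k l, F (Suc k) l}"
    using convex_quad_not_collinear convex_quad_rotate by blast+
  then show "F k l \<noteq> F (Suc k) l" "F k l \<noteq> F k (Suc l)"
    by (auto simp: collinear_2 insert_commute)
qed

lemma dual_convex_adjacent_metric_dual_neq:
  assumes "dual_convex F m n"
  shows "Suc k < m \<Longrightarrow> l < n \<Longrightarrow> metric_dual F k l \<noteq> metric_dual F (Suc k) l"
    and "k < m \<Longrightarrow> Suc l < n \<Longrightarrow> metric_dual F k l \<noteq> metric_dual F k (Suc l)"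
proof -
  have "2 \<le> m" "2 \<le> n"
    using assms by (auto simp: dual_convex_def)
  have planes: "face_plane F k l \<noteq> face_plane F k' l' \<Longrightarrow> metric_dual F k l \<noteq> metric_dual F k' l'"
    if "k < m" "l < n" "k' < m" "l' < n" for k l k' l'
    using dual_convex_face_plane[OF assms that(1,2)] dual_convex_face_plane[OF assms that(3,4)] by auto
  show "metric_dual F k l \<noteq> metric_dual F (Suc k) l" if "Suc k < m" "l < n"
  proof (cases "Suc l < n")
    case True
    then show ?thesis
      using dual_convex_faces_around_vertex(5)[OF assms _ that(1), of "Suc l"] that planes by simp
  next
    case False
    then show ?thesis
      using dual_convex_faces_around_vertex(7)[OF assms _ that(1), of l] that planes \<open>2 \<le> n\<close> by simp
  qed
  show "metric_dual F k l \<noteq> metric_dual F k (Suc l)" if "k < m" "Suc l < n"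
  proof (cases "Suc k < m")
    case True
    then show ?thesis
      using dual_convex_faces_around_vertex(8)[OF assms _ True _ that(2)] that planes by simp
  next
    case False
    then show ?thesis
      using dual_convex_faces_around_vertex(6)[OF assms _ that(1) _ that(2)] that planes \<open>2 \<le> m\<close> by simp
  qed
qed

lemma dual_convex_adjacent_slopes_neq:
  assumes "dual_convex F m n" "k < m" "l < n" "k' < m" "l' < n" "adjacent (k, l) (k', l')"
  shows "metric_dual F k l $ 1 \<noteq> metric_dual F k' l' $ 1 \<or> metric_dual F k l $ 2 \<noteq> metric_dual F k' l' $ 2"
proof -
  let ?p = "metric_dual F"
  have "\<forall>k l k' l'. k < m \<and> l < n \<and> k' < m \<and> l' < n \<and> adjacent (k, l) (k', l') \<longrightarrow>
      ?p k l $ 1 \<noteq> ?p k' l' $ 1 \<or> ?p k l $ 2 \<noteq> ?p k' l' $ 2"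
    unfolding all_adjacent_iff
    using dual_convex_adjacent_metric_dual_neq[OF assms(1)]
      dual_convex_vertices_in_dual_plane[OF assms(1)] dual_planes_common_point_slope
    by (smt (verit) Suc_lessD)
  then show ?thesis
    using assms(2-6) by blast
qed

lemma dual_convex_par_edge_iff:
  assumes "dual_convex F m n"
  shows "Suc k < m \<Longrightarrow> l < n \<Longrightarrow> par X (F (Suc k) l - F (Suc k) (Suc l)) \<longleftrightarrow>
      X \<bullet> plane_normal (metric_dual F k l) = 0 \<and> X \<bullet> plane_normal (metric_dual F (Suc k) l) = 0"
    and "k < m \<Longrightarrow> Suc l < n \<Longrightarrow> par X (F k (Suc l) - F (Suc k) (Suc l)) \<longleftrightarrow>
      X \<bullet> plane_normal (metric_dual F k l) = 0 \<and> X \<bullet> plane_normal (metric_dual F k (Suc l)) = 0"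
  by (intro par_common_edge_iff dual_convex_adjacent_metric_dual_neq[OF assms] dual_convex_vertices_in_dual_plane[OF assms];
      use dual_convex_edges_neq[OF assms] in simp)+

section \<open>Reciprocal-parallel collections\<close>

definition face_orthogonal :: "(nat \<Rightarrow> nat \<Rightarrow> pt) \<Rightarrow> nat \<Rightarrow> nat \<Rightarrow> (nat \<Rightarrow> nat \<Rightarrow> pt) \<Rightarrow> bool" where
  "face_orthogonal p m n C \<longleftrightarrow> (\<forall>k l k' l'. k < m \<and> l < n \<and> k' < m \<and> l' < n \<and> adjacent (k, l) (k', l') \<longrightarrow>
     (C k l - C k' l') \<bullet> plane_normal (p k l) = 0)"

lemma face_orthogonal_iff_edges:
  "face_orthogonal p m n C \<longleftrightarrow>
    (\<forall>k l. Suc k < m \<and> l < n \<longrightarrow> (C (Suc k) l - C k l) \<bullet> plane_normal (p k l) = 0 \<and>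
                                      (C (Suc k) l - C k l) \<bullet> plane_normal (p (Suc k) l) = 0) \<and>
    (\<forall>k l. k < m \<and> Suc l < n \<longrightarrow> (C k (Suc l) - C k l) \<bullet> plane_normal (p k l) = 0 \<and>
                                      (C k (Suc l) - C k l) \<bullet> plane_normal (p k (Suc l)) = 0)"
  unfolding face_orthogonal_def all_adjacent_iff by (auto simp: inner_diff_left)

lemma reciprocal_parallel_Suc_iff:
  "reciprocal_parallel F m n C \<longleftrightarrow> not_all_equal C m n \<and>
     (\<forall>k l. Suc k < m \<and> l < n \<longrightarrow> par (C (Suc k) l - C k l) (F (Suc k) l - F (Suc k) (Suc l))) \<and>
     (\<forall>k l. k < m \<and> Suc l < n \<longrightarrow> par (C k (Suc l) - C k l) (F k (Suc l) - F (Suc k) (Suc l)))"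
proof -
  have "(\<forall>i j. i < m \<and> 0 < j \<and> j < n \<longrightarrow> par (C i j - C i (j - 1)) (F i j - F (Suc i) j)) \<longleftrightarrow>
      (\<forall>k l. k < m \<and> Suc l < n \<longrightarrow> par (C k (Suc l) - C k l) (F k (Suc l) - F (Suc k) (Suc l)))"
    by (metis Suc_pred diff_Suc_1 zero_less_Suc)
  moreover have "(\<forall>i j. 0 < i \<and> i < m \<and> j < n \<longrightarrow> par (C i j - C (i - 1) j) (F i j - F i (Suc j))) \<longleftrightarrow>
      (\<forall>k l. Suc k < m \<and> l < n \<longrightarrow> par (C (Suc k) l - C k l) (F (Suc k) l - F (Suc k) (Suc l)))"
    by (metis Suc_pred diff_Suc_1 zero_less_Suc)
  ultimately show ?thesis
    unfolding reciprocal_parallel_def by blast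
qed

lemma reciprocal_parallel_iff_face_orthogonal:
  assumes "dual_convex F m n"
  shows "reciprocal_parallel F m n C \<longleftrightarrow> not_all_equal C m n \<and> face_orthogonal (metric_dual F) m n C"
  unfolding reciprocal_parallel_Suc_iff face_orthogonal_iff_edges
  by (auto simp: dual_convex_par_edge_iff[OF assms])

lemma face_orthogonal_iff_heights:
  fixes c :: "nat \<Rightarrow> nat \<Rightarrow> pt" and h :: "nat \<Rightarrow> nat \<Rightarrow> real"
  assumes "\<forall>k l. k < m \<and> l < n \<longrightarrow> C k l = vector [- (c k l $ 2), c k l $ 1, h k l]"
  shows "face_orthogonal p m n C \<longleftrightarrow>
    (\<forall>k l k' l'. k < m \<and> l < n \<and> k' < m \<and> l' < n \<and> adjacent (k, l) (k', l') \<longrightarrow>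
       h k l - h k' l' = (c k l $ 1 - c k' l' $ 1) * (p k l $ 2) - (c k l $ 2 - c k' l' $ 2) * (p k l $ 1))"
proof -
  have "(vector [- (x$2), x$1, s] - vector [- (y$2), y$1, t]) \<bullet> plane_normal P = 0 \<longleftrightarrow>
      s - t = (x$1 - y$1) * P$2 - (x$2 - y$2) * P$1" for x y P :: pt and s t
    by (auto simp: plane_normal_def inner_vec3 algebra_simps)
  then show ?thesis
    unfolding face_orthogonal_def using assms by auto
qed

section \<open>Christoffel duality\<close>

text \<open>Inverts \<open>C = (-c\<^sub>2, c\<^sub>1, h)\<close> on top views: \<open>c = quarter_turn C c\<^sub>3\<close>.\<close>

definition quarter_turn :: "pt \<Rightarrow> real \<Rightarrow> pt" where
  "quarter_turn X t = vector [X$2, - (X$1), t]"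

lemma quarter_turn_diff: "quarter_turn X s - quarter_turn Y t = quarter_turn (X - Y) (s - t)"
  by (simp add: quarter_turn_def vec_eq_iff forall_3)

lemma par_quarter_turn:
  assumes "V \<in> dual_plane P" "V \<in> dual_plane Q" "X \<bullet> (plane_normal P - plane_normal Q) = 0"
  shows "par (quarter_turn X ((V \<times> X)$3)) (P - Q)"
proof (rule par_if_top_views_par)
  show "plane_normal V \<bullet> quarter_turn X ((V \<times> X)$3) = 0"
    by (simp add: plane_normal_def quarter_turn_def inner_vec3 cross_components algebra_simps)
  show "plane_normal V \<bullet> (P - Q) = 0"
  proof -
    have "P \<in> dual_plane V" "Q \<in> dual_plane V"
      using assms(1,2) mem_dual_plane_commute by blast+
    then show ?thesis
      by (simp add: mem_dual_plane_iff inner_diff_right)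
  qed
  show "quarter_turn X ((V \<times> X)$3) $ 1 * (P - Q) $ 2 - quarter_turn X ((V \<times> X)$3) $ 2 * (P - Q) $ 1 = 0"
    using assms(3) by (simp add: plane_normal_def quarter_turn_def inner_vec3 algebra_simps)
qed

lemma dual_quads_quarter_turn:
  fixes V C0 C1 C2 C3 P0 P1 P2 P3 :: pt and \<phi>0 \<phi>1 \<phi>2 \<phi>3 :: real
  assumes V: "V \<in> dual_plane P0" "V \<in> dual_plane P1" "V \<in> dual_plane P2" "V \<in> dual_plane P3"
    and C: "(C1 - C0) \<bullet> plane_normal P0 = 0" "(C1 - C0) \<bullet> plane_normal P1 = 0"
      "(C2 - C1) \<bullet> plane_normal P1 = 0" "(C2 - C1) \<bullet> plane_normal P2 = 0"
      "(C2 - C3) \<bullet> plane_normal P2 = 0" "(C2 - C3) \<bullet> plane_normal P3 = 0"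
      "(C3 - C0) \<bullet> plane_normal P3 = 0" "(C3 - C0) \<bullet> plane_normal P0 = 0"
    and \<phi>: "\<phi>1 - \<phi>0 = (V \<times> (C1 - C0))$3" "\<phi>2 - \<phi>1 = (V \<times> (C2 - C1))$3" "\<phi>2 - \<phi>3 = (V \<times> (C2 - C3))$3"
  shows "dual_quads (quarter_turn C0 \<phi>0) (quarter_turn C1 \<phi>1) (quarter_turn C2 \<phi>2) (quarter_turn C3 \<phi>3) P0 P1 P2 P3"
proof -
  define \<kappa> where "\<kappa> = \<phi>0 - (V \<times> C0)$3"
  have \<phi>_eq: "\<phi>0 = (V \<times> C0)$3 + \<kappa>" "\<phi>1 = (V \<times> C1)$3 + \<kappa>" "\<phi>2 = (V \<times> C2)$3 + \<kappa>" "\<phi>3 = (V \<times> C3)$3 + \<kappa>"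
    using \<phi> by (simp_all add: \<kappa>_def cross_components algebra_simps)
  have diff: "quarter_turn X ((V \<times> X)$3 + \<kappa>) - quarter_turn Y ((V \<times> Y)$3 + \<kappa>)
      = quarter_turn (X - Y) ((V \<times> (X - Y))$3)" for X Y
    by (simp add: quarter_turn_diff cross_components algebra_simps)
  show ?thesis
    unfolding dual_quads_def \<phi>_eq diff
    by (intro conjI par_quarter_turn V; insert C; simp add: inner_diff_left inner_diff_right; linarith)
qed

lemma christoffel_dual_adjacent_par:
  assumes "christoffel_dual c p m n" "2 \<le> m" "2 \<le> n"
    and "k < m" "l < n" "k' < m" "l' < n" "adjacent (k, l) (k', l')"
  shows "par (c k l - c k' l') (p k l - p k' l')"
proof -
  have horiz: "par (c k l - c (Suc k) l) (p k l - p (Suc k) l)" if "Suc k < m" "l < n" for k l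
  proof (cases "Suc l < n")
    case True
    then show ?thesis
      using assms(1) that par_diff_commute by (auto simp: christoffel_dual_def dual_quads_def)
  next
    case False
    then have "Suc (l - 1) = l" "Suc (l - 1) < n"
      using that \<open>2 \<le> n\<close> by auto
    then show ?thesis
      using assms(1) that unfolding christoffel_dual_def dual_quads_def by metis
  qed
  have vert: "par (c k l - c k (Suc l)) (p k l - p k (Suc l))" if "k < m" "Suc l < n" for k l
  proof (cases "Suc k < m")
    case True
    then show ?thesis
      using assms(1) that by (auto simp: christoffel_dual_def dual_quads_def)
  next
    case False
    then have "Suc (k - 1) = k" "Suc (k - 1) < m"
      using that \<open>2 \<le> m\<close> by auto
    then show ?thesis
      using assms(1) that par_diff_commute unfolding christoffel_dual_def dual_quads_def by metis
  qed
  have "\<forall>k l k' l'. k < m \<and> l < n \<and> k' < m \<and> l' < n \<and> adjacent (k, l) (k', l') \<longrightarrow>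
      par (c k l - c k' l') (p k l - p k' l')"
    unfolding all_adjacent_iff using horiz vert par_diff_commute by blast
  then show ?thesis
    using assms(4-8) by blast
qed

lemma dual_convex_moment_common_edge:
  assumes "dual_convex F m n" "face_orthogonal (metric_dual F) m n C"
  shows "Suc k < m \<Longrightarrow> l < n \<Longrightarrow> F (Suc k) (Suc l) \<times> (C (Suc k) l - C k l) = F (Suc k) l \<times> (C (Suc k) l - C k l)"
    and "k < m \<Longrightarrow> Suc l < n \<Longrightarrow> F (Suc k) (Suc l) \<times> (C k (Suc l) - C k l) = F k (Suc l) \<times> (C k (Suc l) - C k l)"
proof -
  show "F (Suc k) (Suc l) \<times> (C (Suc k) l - C k l) = F (Suc k) l \<times> (C (Suc k) l - C k l)"
    if "Suc k < m" "l < n"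
    by (rule cross3_eq_on_common_line[OF dual_convex_adjacent_metric_dual_neq(1)[OF assms(1) that]])
      (use dual_convex_vertices_in_dual_plane[OF assms(1)] assms(2)[unfolded face_orthogonal_iff_edges] that in auto)
  show "F (Suc k) (Suc l) \<times> (C k (Suc l) - C k l) = F k (Suc l) \<times> (C k (Suc l) - C k l)"
    if "k < m" "Suc l < n"
    by (rule cross3_eq_on_common_line[OF dual_convex_adjacent_metric_dual_neq(2)[OF assms(1) that]])
      (use dual_convex_vertices_in_dual_plane[OF assms(1)] assms(2)[unfolded face_orthogonal_iff_edges] that in auto)
qed

lemma christoffel_dual_quarter_turn:
  assumes "dual_convex F m n" "face_orthogonal (metric_dual F) m n C"
  obtains \<phi> where "christoffel_dual (\<lambda>k l. quarter_turn (C k l) (\<phi> k l)) (metric_dual F) m n"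
proof -
  \<comment> \<open>Vertical moments of the edge differences of \<open>C\<close> about a point of the shared edge; by
    \<open>dual_convex_moment_common_edge\<close> the choice of that point does not matter, whence closedness.\<close>
  define w1 where "w1 k l = (F (Suc k) (Suc l) \<times> (C (Suc k) l - C k l))$3" for k l
  define w2 where "w2 k l = (F (Suc k) (Suc l) \<times> (C k (Suc l) - C k l))$3" for k l
  have w1_Suc: "w1 k (Suc l) = (F (Suc k) (Suc l) \<times> (C (Suc k) (Suc l) - C k (Suc l)))$3"
    and w2_Suc: "w2 (Suc k) l = (F (Suc k) (Suc l) \<times> (C (Suc k) (Suc l) - C (Suc k) l))$3"
    if "Suc k < m" "Suc l < n" for k l
    using dual_convex_moment_common_edge[OF assms] that by (simp_all add: w1_def w2_def)
  have closed: "w1 k l + w2 (Suc k) l = w2 k l + w1 k (Suc l)" if "Suc k < m" "Suc l < n" for k l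
    unfolding w1_Suc[OF that] w2_Suc[OF that] by (simp add: w1_def w2_def cross_components algebra_simps)
  obtain \<phi> where \<phi>1: "\<And>k l. Suc k < m \<Longrightarrow> l < n \<Longrightarrow> \<phi> (Suc k) l - \<phi> k l = w1 k l"
    and \<phi>2: "\<And>k l. \<phi> k (Suc l) - \<phi> k l = w2 k l"
    using closed_grid_form_potential[of m n w1 w2] closed by blast
  have "dual_quads (quarter_turn (C k l) (\<phi> k l)) (quarter_turn (C (Suc k) l) (\<phi> (Suc k) l))
      (quarter_turn (C (Suc k) (Suc l)) (\<phi> (Suc k) (Suc l))) (quarter_turn (C k (Suc l)) (\<phi> k (Suc l)))
      (metric_dual F k l) (metric_dual F (Suc k) l) (metric_dual F (Suc k) (Suc l)) (metric_dual F k (Suc l))"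
    if "Suc k < m" "Suc l < n" for k l
  proof (rule dual_quads_quarter_turn[where V = "F (Suc k) (Suc l)"])
    show "F (Suc k) (Suc l) \<in> dual_plane (metric_dual F k l)"
      "F (Suc k) (Suc l) \<in> dual_plane (metric_dual F (Suc k) l)"
      "F (Suc k) (Suc l) \<in> dual_plane (metric_dual F (Suc k) (Suc l))"
      "F (Suc k) (Suc l) \<in> dual_plane (metric_dual F k (Suc l))"
      using dual_convex_vertices_in_dual_plane[OF assms(1)] that by simp_all
    show "\<phi> (Suc k) l - \<phi> k l = (F (Suc k) (Suc l) \<times> (C (Suc k) l - C k l))$3"
      "\<phi> (Suc k) (Suc l) - \<phi> (Suc k) l = (F (Suc k) (Suc l) \<times> (C (Suc k) (Suc l) - C (Suc k) l))$3"
      "\<phi> (Suc k) (Suc l) - \<phi> k (Suc l) = (F (Suc k) (Suc l) \<times> (C (Suc k) (Suc l) - C k (Suc l)))$3"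
      using \<phi>1[of k l] \<phi>2[of "Suc k" l] \<phi>1[of k "Suc l"] w1_Suc[OF that] w2_Suc[OF that] that
      by (simp_all add: w1_def cross_components algebra_simps)
  qed (use assms(2)[unfolded face_orthogonal_iff_edges] that in auto)
  then show ?thesis
    using that unfolding christoffel_dual_def by blast
qed

lemma not_all_equal_if_heights:
  fixes C c p :: "nat \<Rightarrow> nat \<Rightarrow> pt" and h :: "nat \<Rightarrow> nat \<Rightarrow> real"
  assumes "\<forall>k l. k < m \<and> l < n \<longrightarrow> C k l = vector [- (c k l $ 2), c k l $ 1, h k l]"
    and "\<forall>k l k' l'. k < m \<and> l < n \<and> k' < m \<and> l' < n \<and> adjacent (k, l) (k', l') \<longrightarrow>
       h k l - h k' l' = (c k l $ 1 - c k' l' $ 1) * (p k l $ 2) - (c k l $ 2 - c k' l' $ 2) * (p k l $ 1)"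
    and "not_all_equal C m n"
  shows "not_all_equal c m n"
proof -
  obtain k l k' l' where kl: "k < m" "l < n" "k' < m" "l' < n" "adjacent (k, l) (k', l')" and "C k l \<noteq> C k' l'"
    using not_all_equal_adjacent[OF assms(3)] by blast
  moreover have "h k l - h k' l' = (c k l $ 1 - c k' l' $ 1) * p k l $ 2 - (c k l $ 2 - c k' l' $ 2) * p k l $ 1"
    using assms(2) kl by blast
  ultimately have "c k l \<noteq> c k' l'"
    using assms(1) kl by auto
  with kl show ?thesis
    unfolding not_all_equal_def by blast
qed

lemma not_all_equal_if_christoffel_dual:
  fixes C c :: "nat \<Rightarrow> nat \<Rightarrow> pt" and h :: "nat \<Rightarrow> nat \<Rightarrow> real"
  assumes "dual_convex F m n"
    and "\<forall>k l. k < m \<and> l < n \<longrightarrow> C k l = vector [- (c k l $ 2), c k l $ 1, h k l]"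
    and "christoffel_dual c (metric_dual F) m n" "not_all_equal c m n"
  shows "not_all_equal C m n"
proof -
  obtain k l k' l' where kl: "k < m" "l < n" "k' < m" "l' < n" "adjacent (k, l) (k', l')" and "c k l \<noteq> c k' l'"
    using not_all_equal_adjacent[OF assms(4)] by blast
  moreover have "2 \<le> m" "2 \<le> n"
    using assms(1) by (auto simp: dual_convex_def)
  ultimately have "(c k l - c k' l') $ 1 \<noteq> 0 \<or> (c k l - c k' l') $ 2 \<noteq> 0"
    using par_top_view_eq_0 christoffel_dual_adjacent_par[OF assms(3)] dual_convex_adjacent_slopes_neq[OF assms(1)]
    by (metis right_minus_eq vector_minus_component)
  moreover have "C a b $ 1 = - (c a b $ 2)" "C a b $ 2 = c a b $ 1" if "a < m" "b < n" for a b
    using assms(2) that by simp_all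
  ultimately have "C k l $ 1 \<noteq> C k' l' $ 1 \<or> C k l $ 2 \<noteq> C k' l' $ 2"
    using kl by auto
  then have "C k l \<noteq> C k' l'"
    by auto
  with kl show ?thesis
    unfolding not_all_equal_def by blast
qed

theorem lemma8:
  fixes F :: "nat \<Rightarrow> nat \<Rightarrow> real^3" and m n :: nat and C :: "nat \<Rightarrow> nat \<Rightarrow> real^3"
  assumes "dual_convex F m n"
  shows "reciprocal_parallel F m n C \<longleftrightarrow>
    (\<exists>c :: nat \<Rightarrow> nat \<Rightarrow> real^3. \<exists>h :: nat \<Rightarrow> nat \<Rightarrow> real.
       (\<forall>k l. k < m \<and> l < n \<longrightarrow> C k l = vector [- (c k l $ 2), c k l $ 1, h k l]) \<and>
       not_all_equal c m n \<and>
       christoffel_dual c (metric_dual F) m n \<and>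
       (\<forall>k l k' l'. k < m \<and> l < n \<and> k' < m \<and> l' < n \<and> adjacent (k, l) (k', l') \<longrightarrow>
          h k l - h k' l' = (c k l $ 1 - c k' l' $ 1) * (metric_dual F k l $ 2)
                            - (c k l $ 2 - c k' l' $ 2) * (metric_dual F k l $ 1)))"
proof (rule iffI, goal_cases)
  case 1
  then have nC: "not_all_equal C m n" and orth: "face_orthogonal (metric_dual F) m n C"
    using reciprocal_parallel_iff_face_orthogonal[OF assms] by auto
  obtain \<phi> where cd: "christoffel_dual (\<lambda>k l. quarter_turn (C k l) (\<phi> k l)) (metric_dual F) m n"
    using christoffel_dual_quarter_turn[OF assms orth] by blast
  define c where "c = (\<lambda>k l. quarter_turn (C k l) (\<phi> k l))"
  define h where "h = (\<lambda>k l. C k l $ 3)"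
  have C_eq: "\<forall>k l. k < m \<and> l < n \<longrightarrow> C k l = vector [- (c k l $ 2), c k l $ 1, h k l]"
    by (simp add: c_def h_def quarter_turn_def vec_eq_iff forall_3)
  note heights = orth[unfolded face_orthogonal_iff_heights[OF C_eq]]
  show ?case
    using C_eq not_all_equal_if_heights[OF C_eq heights nC] cd heights unfolding c_def[symmetric] by blast
next
  case 2
  then obtain c h where C_eq: "\<forall>k l. k < m \<and> l < n \<longrightarrow> C k l = vector [- (c k l $ 2), c k l $ 1, h k l]"
    and "not_all_equal c m n" "christoffel_dual c (metric_dual F) m n"
    and heights: "\<forall>k l k' l'. k < m \<and> l < n \<and> k' < m \<and> l' < n \<and> adjacent (k, l) (k', l') \<longrightarrow>
          h k l - h k' l' = (c k l $ 1 - c k' l' $ 1) * (metric_dual F k l $ 2)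
                            - (c k l $ 2 - c k' l' $ 2) * (metric_dual F k l $ 1)"
    by blast
  then show ?case
    unfolding reciprocal_parallel_iff_face_orthogonal[OF assms] face_orthogonal_iff_heights[OF C_eq]
    using not_all_equal_if_christoffel_dual[OF assms C_eq] by blast
qed

end
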